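(* Let $MSS_{18}=\{p_0,\dots,p_9\}\subset\mathbb{Z}^3$ with $p_0=(0,0,0)$, $p_1=(1,1,0)$, $p_2=(1,2,0)$, $p_3=(0,3,0)$, $p_4=(-1,2,0)$, $p_5=(-1,1,0)$, $p_6=(0,1,-1)$, $p_7=(0,2,-1)$, $p_8=(0,2,1)$, $p_9=(0,1,1)$, and let $x\in MSS_{18}$. Then the digital fundamental groups $\Pi_1^{18}(MSS_{18},x)$ and $\Pi_1^{26}(MSS_{18},x)$ are trivial.
   Context: Adjacencies in $\mathbb{Z}^3$: distinct $x,y\in\mathbb{Z}^3$ are $c_u$-adjacent if at most $u$ coordinates differ by exactly $1$ and all other coordinates are equal; $c_2$-adjacency is called 18-adjacency and $c_3$-adjacency 26-adjacency. For $m\ge 0$, $[0,m]_{\mathbb{Z}}=\{0,\dots,m\}$ with 2-adjacency (consecutive integers adjacent). A map $f:(X,\kappa)\to(Y,\lambda)$ is continuous iff $\kappa$-adjacent points map to equal or $\lambda$-adjacent points. For a digital image $(X,\kappa)$ and $x\in X$, a $\kappa$-loop based at $x$ is a continuous $f:[0,m]_{\mathbb{Z}}\to X$ with $f(0)=f(m)=x$. A trivial extension of $f$ is a loop $f':[0,m']_{\mathbb{Z}}\to X$ that visits the same sequence of points as $f$ in the same order, possibly pausing (remaining constant) for additional time steps at some points. Two loops $f,g$ based at $x$ with the same domain $[0,m]_{\mathbb{Z}}$ are homotopic relative to the endpoints if there is a function $F:[0,m]_{\mathbb{Z}}\times[0,k]_{\mathbb{Z}}\to X$ with $F(\cdot,0)=f$,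 $F(\cdot,k)=g$, each $F(\cdot,t)$ a $\kappa$-loop based at $x$ (so $F(0,t)=F(m,t)=x$), and each $t\mapsto F(s,t)$ continuous. Loops $f,g$ based at $x$ are equivalent if they have trivial extensions with a common domain that are homotopic relative to the endpoints. The digital fundamental group $\Pi_1^{\kappa}(X,x)$ is the set of equivalence classes of $\kappa$-loops based at $x$, with the group operation induced by concatenation of loops; it is trivial if every $\kappa$-loop based at $x$ is equivalent to the constant loop at $x$. *)

theory Defs
  imports Main
begin

type_synonym pt3 = "int \<times> int \<times> int"

definition cadj :: "nat \<Rightarrow> pt3 \<Rightarrow> pt3 \<Rightarrow> bool" where
  "cadj u p q \<longleftrightarrow>
     (let (a, b, c) = p; (a', b', c') = q in
       p \<noteq> q \<and> \<bar>a - a'\<bar> \<le> 1 \<and> \<bar>b - b'\<bar> \<le> 1 \<and> \<bar>c - c'\<bar> \<le> 1 \<and>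
       (if a \<noteq> a' then 1 else 0) + (if b \<noteq> b' then 1 else 0) + (if c \<noteq> c' then 1 else 0) \<le> (u::nat))"

abbreviation adj18 :: "pt3 \<Rightarrow> pt3 \<Rightarrow> bool" where "adj18 \<equiv> cadj 2"
abbreviation adj26 :: "pt3 \<Rightarrow> pt3 \<Rightarrow> bool" where "adj26 \<equiv> cadj 3"

text \<open>A continuous map from the digital interval [0,m] (2-adjacency) into (X,kappa);
  maps are represented as functions on nat, only the values on {0..m} matter.\<close>
definition dpath :: "'a set \<Rightarrow> ('a \<Rightarrow> 'a \<Rightarrow> bool) \<Rightarrow> nat \<Rightarrow> (nat \<Rightarrow> 'a) \<Rightarrow> bool" where
  "dpath X \<kappa> m f \<longleftrightarrow> (\<forall>i\<le>m. f i \<in> X) \<and> (\<forall>i<m. f i = f (Suc i) \<or> \<kappa> (f i) (f (Suc i)))"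

definition dloop :: "'a set \<Rightarrow> ('a \<Rightarrow> 'a \<Rightarrow> bool) \<Rightarrow> 'a \<Rightarrow> nat \<Rightarrow> (nat \<Rightarrow> 'a) \<Rightarrow> bool" where
  "dloop X \<kappa> x m f \<longleftrightarrow> dpath X \<kappa> m f \<and> f 0 = x \<and> f m = x"

text \<open>f' on [0,m'] is a trivial extension of f on [0,m]: it visits the same sequence of points
  in the same order, possibly pausing; i.e. f' = f o h on [0,m'] for a reparametrization h
  with h 0 = 0, h m' = m, and each step of h either stays or advances by one.\<close>
definition trivial_ext :: "nat \<Rightarrow> (nat \<Rightarrow> 'a) \<Rightarrow> nat \<Rightarrow> (nat \<Rightarrow> 'a) \<Rightarrow> bool" where
  "trivial_ext m f m' f' \<longleftrightarrow>
     (\<exists>h :: nat \<Rightarrow> nat. h 0 = 0 \<and> h m' = m \<and>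
        (\<forall>i<m'. h (Suc i) = h i \<or> h (Suc i) = Suc (h i)) \<and>
        (\<forall>i\<le>m'. f' i = f (h i)))"

definition homotopic_rel_end ::
  "'a set \<Rightarrow> ('a \<Rightarrow> 'a \<Rightarrow> bool) \<Rightarrow> 'a \<Rightarrow> nat \<Rightarrow> (nat \<Rightarrow> 'a) \<Rightarrow> (nat \<Rightarrow> 'a) \<Rightarrow> bool" where
  "homotopic_rel_end X \<kappa> x m f g \<longleftrightarrow>
     (\<exists>(F :: nat \<Rightarrow> nat \<Rightarrow> 'a) k.
        (\<forall>s\<le>m. F s 0 = f s) \<and> (\<forall>s\<le>m. F s k = g s) \<and>
        (\<forall>t\<le>k. dloop X \<kappa> x m (\<lambda>s. F s t)) \<and>
        (\<forall>s\<le>m. dpath X \<kappa> k (\<lambda>t. F s t)))"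

definition loop_equiv ::
  "'a set \<Rightarrow> ('a \<Rightarrow> 'a \<Rightarrow> bool) \<Rightarrow> 'a \<Rightarrow> nat \<Rightarrow> (nat \<Rightarrow> 'a) \<Rightarrow> nat \<Rightarrow> (nat \<Rightarrow> 'a) \<Rightarrow> bool" where
  "loop_equiv X \<kappa> x m f n g \<longleftrightarrow>
     (\<exists>M f' g'. trivial_ext m f M f' \<and> trivial_ext n g M g' \<and>
        homotopic_rel_end X \<kappa> x M f' g')"

definition trivial_fundamental_group :: "'a set \<Rightarrow> ('a \<Rightarrow> 'a \<Rightarrow> bool) \<Rightarrow> 'a \<Rightarrow> bool" where
  "trivial_fundamental_group X \<kappa> x \<longleftrightarrow>
     (\<forall>m f. dloop X \<kappa> x m f \<longrightarrow> loop_equiv X \<kappa> x m f 0 (\<lambda>_. x))"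

definition MSS18 :: "pt3 set" where
  "MSS18 = {(0,0,0), (1,1,0), (1,2,0), (0,3,0), (-1,2,0), (-1,1,0),
            (0,1,-1), (0,2,-1), (0,2,1), (0,1,1)}"

end

theory Submission
  imports Defs
begin

text \<open>For each base point x choose another point p of MSS18 such that any two neighbours of p
  are joined through a common neighbour of p. A loop at x is then pointwise adjacent, hence
  homotopic, to a loop avoiding p: every maximal run of visits to p is replaced by such a detour
  point. The rest MSS18 - {p} retracts onto x through finitely many maps that fix x, are
  continuous, and move each point by at most one adjacency step; following these maps contracts
  the detoured loop.\<close>

lemma dpath_mono: "dpath X \<kappa> m f \<Longrightarrow> X \<subseteq> Y \<Longrightarrow> dpath Y \<kappa> m f"
  unfolding dpath_def by blast

lemma dloop_mono: "dloop X \<kappa> x m f \<Longrightarrow> X \<subseteq> Y \<Longrightarrow> dloop Y \<kappa> x m f"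
  unfolding dloop_def using dpath_mono by blast

lemma homotopic_rel_end_mono:
  "homotopic_rel_end X \<kappa> x m f g \<Longrightarrow> X \<subseteq> Y \<Longrightarrow> homotopic_rel_end Y \<kappa> x m f g"
  unfolding homotopic_rel_end_def by (metis dpath_mono dloop_mono)

lemma homotopic_rel_end_close_left:
  assumes h: "homotopic_rel_end X \<kappa> x m g h" and f: "dloop X \<kappa> x m f"
    and close: "\<forall>s\<le>m. f s = g s \<or> \<kappa> (f s) (g s)"
  shows "homotopic_rel_end X \<kappa> x m f h"
proof -
  from h obtain F k where F0: "\<forall>s\<le>m. F s 0 = g s" and Fk: "\<forall>s\<le>m. F s k = h s"
    and loops: "\<forall>t\<le>k. dloop X \<kappa> x m (\<lambda>s. F s t)" and paths: "\<forall>s\<le>m. dpath X \<kappa> k (\<lambda>t. F s t)"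
    unfolding homotopic_rel_end_def by blast
  define F' where "F' s t = (case t of 0 \<Rightarrow> f s | Suc t' \<Rightarrow> F s t')" for s t
  show ?thesis
    unfolding homotopic_rel_end_def
  proof (intro exI[of _ F'] exI[of _ "Suc k"] conjI allI impI)
    fix t assume "t \<le> Suc k"
    then show "dloop X \<kappa> x m (\<lambda>s. F' s t)"
      using f loops by (cases t) (auto simp: F'_def)
  next
    fix s assume s: "s \<le> m"
    show "F' s 0 = f s" "F' s (Suc k) = h s"
      using Fk s by (auto simp: F'_def)
    show "dpath X \<kappa> (Suc k) (\<lambda>t. F' s t)"
      using paths s f close F0 by (auto simp: dpath_def dloop_def F'_def less_Suc_eq_0_disj
          split: nat.split)
  qed
qed

lemma loop_equiv_const_if_homotopic:
  assumes "homotopic_rel_end X \<kappa> x m f (\<lambda>_. x)"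
  shows "loop_equiv X \<kappa> x m f 0 (\<lambda>_. x)"
proof -
  have "trivial_ext m f m f"
    unfolding trivial_ext_def by (rule exI[of _ id]) auto
  moreover have "trivial_ext 0 (\<lambda>_. x) m (\<lambda>_. x)"
    unfolding trivial_ext_def by (rule exI[of _ "\<lambda>_. 0"]) auto
  ultimately show ?thesis
    using assms unfolding loop_equiv_def by (intro exI conjI)
qed

definition pointed_null_homotopic :: "'a set \<Rightarrow> ('a \<Rightarrow> 'a \<Rightarrow> bool) \<Rightarrow> 'a \<Rightarrow> ('a \<Rightarrow> 'a) \<Rightarrow> bool" where
  "pointed_null_homotopic X \<kappa> x r \<longleftrightarrow>
     (\<exists>(R :: nat \<Rightarrow> 'a \<Rightarrow> 'a) k.
        (\<forall>p\<in>X. R 0 p = r p) \<and> (\<forall>p\<in>X. R k p = x) \<and> (\<forall>t\<le>k. R t x = x) \<and>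
        (\<forall>t\<le>k. \<forall>p\<in>X. R t p \<in> X) \<and>
        (\<forall>t\<le>k. \<forall>p\<in>X. \<forall>q\<in>X. \<kappa> p q \<longrightarrow> R t p = R t q \<or> \<kappa> (R t p) (R t q)) \<and>
        (\<forall>t<k. \<forall>p\<in>X. R t p = R (Suc t) p \<or> \<kappa> (R t p) (R (Suc t) p)))"

definition pointed_contractible :: "'a set \<Rightarrow> ('a \<Rightarrow> 'a \<Rightarrow> bool) \<Rightarrow> 'a \<Rightarrow> bool" where
  "pointed_contractible X \<kappa> x \<longleftrightarrow> pointed_null_homotopic X \<kappa> x id"

lemma homotopic_rel_end_const_if_pointed_contractible:
  assumes "pointed_contractible X \<kappa> x" and f: "dloop X \<kappa> x m f"
  shows "homotopic_rel_end X \<kappa> x m f (\<lambda>_. x)"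
proof -
  from assms(1) obtain R k where R0: "\<forall>p\<in>X. R 0 p = id p" and Rk: "\<forall>p\<in>X. R k p = x"
    and Rx: "\<forall>t\<le>k. R t x = x" and RX: "\<forall>t\<le>k. \<forall>p\<in>X. R t p \<in> X"
    and Rcont: "\<forall>t\<le>k. \<forall>p\<in>X. \<forall>q\<in>X. \<kappa> p q \<longrightarrow> R t p = R t q \<or> \<kappa> (R t p) (R t q)"
    and Rstep: "\<forall>t<k. \<forall>p\<in>X. R t p = R (Suc t) p \<or> \<kappa> (R t p) (R (Suc t) p)"
    unfolding pointed_contractible_def pointed_null_homotopic_def by (elim exE conjE) (rule that)
  have fX: "\<forall>s\<le>m. f s \<in> X" and fstep: "\<forall>s<m. f s = f (Suc s) \<or> \<kappa> (f s) (f (Suc s))"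
    and "f 0 = x" "f m = x"
    using f by (auto simp: dloop_def dpath_def)
  show ?thesis
    unfolding homotopic_rel_end_def
  proof (intro exI[of _ "\<lambda>s t. R t (f s)"] exI[of _ k] conjI allI impI)
    fix t assume t: "t \<le> k"
    have step: "R t (f s) = R t (f (Suc s)) \<or> \<kappa> (R t (f s)) (R t (f (Suc s)))" if "s < m" for s
    proof -
      have "f s \<in> X" "f (Suc s) \<in> X" using fX that by auto
      note cont = Rcont[rule_format, OF t this]
      from fstep that have "f s = f (Suc s) \<or> \<kappa> (f s) (f (Suc s))" by blast
      then show ?thesis using cont by auto
    qed
    have "R t (f s) \<in> X" if "s \<le> m" for s
      using RX fX t that by simp
    moreover have "R t (f 0) = x" "R t (f m) = x"
      using Rx t \<open>f 0 = x\<close> \<open>f m = x\<close> by auto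
    ultimately show "dloop X \<kappa> x m (\<lambda>s. R t (f s))"
      unfolding dloop_def dpath_def using step by blast
  next
    fix s assume s: "s \<le> m"
    show "R 0 (f s) = f s" "R k (f s) = x"
      using R0 Rk fX s by auto
    show "dpath X \<kappa> k (\<lambda>t. R t (f s))"
      using RX Rstep fX s unfolding dpath_def by (simp add: less_imp_le)
  qed
qed

definition prev_where :: "(nat \<Rightarrow> bool) \<Rightarrow> nat \<Rightarrow> nat" where
  "prev_where P s = (GREATEST j. j < s \<and> P j)"

definition next_where :: "(nat \<Rightarrow> bool) \<Rightarrow> nat \<Rightarrow> nat" where
  "next_where P s = (LEAST j. s < j \<and> P j)"

lemma prev_where_Suc: "prev_where P (Suc s) = (if P s then s else prev_where P s)"
proof (cases "P s")
  case True
  then show ?thesis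
    unfolding prev_where_def by (intro if_P Greatest_equality) auto
next
  case False
  then have "j < Suc s \<and> P j \<longleftrightarrow> j < s \<and> P j" for j
    by (auto simp: less_Suc_eq)
  then show ?thesis
    using False by (simp add: prev_where_def)
qed

lemma next_where_unfold: "next_where P s = (if P (Suc s) then Suc s else next_where P (Suc s))"
proof (cases "P (Suc s)")
  case True
  then show ?thesis
    unfolding next_where_def by (intro if_P Least_equality) auto
next
  case False
  then have "s < j \<and> P j \<longleftrightarrow> Suc s < j \<and> P j" for j
    by (metis Suc_lessD Suc_lessI)
  then show ?thesis
    using False by (simp add: next_where_def)
qed

lemma prev_where:
  assumes "P 0" "0 < s"
  shows "prev_where P s < s" "P (prev_where P s)" "prev_where P s < j \<Longrightarrow> j < s \<Longrightarrow> \<not> P j"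
proof -
  have "prev_where P s < s \<and> P (prev_where P s)"
    unfolding prev_where_def by (rule GreatestI_nat[of _ 0 s]) (use assms in auto)
  then show "prev_where P s < s" "P (prev_where P s)"
    by auto
  show "\<not> P j" if "prev_where P s < j" "j < s"
    using that Greatest_le_nat[of "\<lambda>j. j < s \<and> P j" j s] unfolding prev_where_def by auto
qed

lemma next_where:
  assumes "P m" "s < m"
  shows "s < next_where P s" "next_where P s \<le> m" "P (next_where P s)"
    "s < j \<Longrightarrow> j < next_where P s \<Longrightarrow> \<not> P j"
proof -
  have "s < next_where P s \<and> P (next_where P s)"
    unfolding next_where_def by (rule LeastI[of _ m]) (use assms in auto)
  then show "s < next_where P s" "P (next_where P s)"
    by auto
  show "next_where P s \<le> m"
    unfolding next_where_def by (rule Least_le) (use assms in auto)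
  show "\<not> P j" if "s < j" "j < next_where P s"
    using that not_less_Least[of j "\<lambda>j. s < j \<and> P j"] unfolding next_where_def by auto
qed

definition bypassable :: "'a set \<Rightarrow> ('a \<Rightarrow> 'a \<Rightarrow> bool) \<Rightarrow> 'a \<Rightarrow> bool" where
  "bypassable X \<kappa> p \<longleftrightarrow>
     (\<forall>a\<in>X. \<forall>c\<in>X. \<kappa> a p \<longrightarrow> \<kappa> p c \<longrightarrow>
        (\<exists>y\<in>X - {p}. \<kappa> p y \<and> (a = y \<or> \<kappa> a y) \<and> (y = c \<or> \<kappa> y c)))"

lemma dloop_run_neighbours:
  assumes f: "dloop X \<kappa> x m f" and "p \<noteq> x" and s: "f s = p" "s \<le> m"
  defines "lo \<equiv> prev_where (\<lambda>j. f j \<noteq> p) s" and "hi \<equiv> next_where (\<lambda>j. f j \<noteq> p) s"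
  shows "f lo \<in> X" "\<kappa> (f lo) p" "f hi \<in> X" "\<kappa> p (f hi)"
proof -
  have fX: "\<forall>i\<le>m. f i \<in> X" and fstep: "\<forall>i<m. f i = f (Suc i) \<or> \<kappa> (f i) (f (Suc i))"
    and "f 0 \<noteq> p" "f m \<noteq> p"
    using f \<open>p \<noteq> x\<close> by (auto simp: dloop_def dpath_def)
  then have "0 < s" "s < m"
    using s by (auto intro: gr0I le_neq_implies_less)
  note lo = prev_where[of "\<lambda>j. f j \<noteq> p", OF \<open>f 0 \<noteq> p\<close> \<open>0 < s\<close>, folded lo_def]
  note hi = next_where[of "\<lambda>j. f j \<noteq> p", OF \<open>f m \<noteq> p\<close> \<open>s < m\<close>, folded hi_def]
  have "f (Suc lo) = p"
    using lo \<open>f s = p\<close> by (cases "Suc lo = s") auto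
  then show "\<kappa> (f lo) p"
    using fstep lo \<open>s < m\<close> by (metis less_trans)
  show "f lo \<in> X"
    using fX lo \<open>s < m\<close> by simp
  obtain j where j: "hi = Suc j"
    using hi(1) by (cases hi) auto
  have "f j = p"
    using hi(4) \<open>f s = p\<close> j hi(1) by (cases "j = s") auto
  then show "\<kappa> p (f hi)"
    using fstep hi(2,3) j by (metis Suc_le_lessD)
  show "f hi \<in> X"
    using fX hi(2) by simp
qed

lemma dloop_avoid_bypassable:
  assumes f: "dloop X \<kappa> x m f" and "p \<noteq> x" and "bypassable X \<kappa> p"
  obtains g where "dloop (X - {p}) \<kappa> x m g" and "\<forall>s\<le>m. f s = g s \<or> \<kappa> (f s) (g s)"
proof -
  define Y where "Y a c = (SOME y. y \<in> X - {p} \<and> \<kappa> p y \<and> (a = y \<or> \<kappa> a y) \<and> (y = c \<or> \<kappa> y c))"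
    for a c
  have Y: "Y a c \<in> X - {p} \<and> \<kappa> p (Y a c) \<and> (a = Y a c \<or> \<kappa> a (Y a c)) \<and> (Y a c = c \<or> \<kappa> (Y a c) c)"
    if "a \<in> X" "c \<in> X" "\<kappa> a p" "\<kappa> p c" for a c
    unfolding Y_def by (rule someI_ex) (use assms(3) that in \<open>auto simp: bypassable_def\<close>)
  let ?lo = "prev_where (\<lambda>j. f j \<noteq> p)" and ?hi = "next_where (\<lambda>j. f j \<noteq> p)"
  define g where "g s = (if f s = p then Y (f (?lo s)) (f (?hi s)) else f s)" for s
  have g_run: "g s \<in> X - {p} \<and> \<kappa> p (g s) \<and> (f (?lo s) = g s \<or> \<kappa> (f (?lo s)) (g s))
      \<and> (g s = f (?hi s) \<or> \<kappa> (g s) (f (?hi s)))" if "f s = p" "s \<le> m" for s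
    using Y dloop_run_neighbours[OF f \<open>p \<noteq> x\<close> that] that by (simp add: g_def)
  have fX: "\<forall>i\<le>m. f i \<in> X" and fstep: "\<forall>i<m. f i = f (Suc i) \<or> \<kappa> (f i) (f (Suc i))"
    and "f 0 = x" "f m = x"
    using f by (auto simp: dloop_def dpath_def)
  have close: "g s \<in> X - {p} \<and> (f s = g s \<or> \<kappa> (f s) (g s))" if "s \<le> m" for s
    using g_run[OF _ that] fX that by (cases "f s = p") (auto simp: g_def)
  have step: "g s = g (Suc s) \<or> \<kappa> (g s) (g (Suc s))" if "s < m" for s
  proof (cases "f s = p"; cases "f (Suc s) = p")
    assume "f s \<noteq> p" "f (Suc s) \<noteq> p"
    then show ?thesis
      using fstep that by (simp add: g_def)
  next
    assume "f s \<noteq> p" "f (Suc s) = p"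
    then show ?thesis
      using g_run[of "Suc s"] that by (simp add: g_def prev_where_Suc)
  next
    assume "f s = p" "f (Suc s) \<noteq> p"
    then show ?thesis
      using g_run[of s] that by (simp add: g_def next_where_unfold[of _ s])
  next
    assume "f s = p" "f (Suc s) = p"
    then show ?thesis
      by (simp add: g_def prev_where_Suc next_where_unfold[of _ s])
  qed
  have "g 0 = x" "g m = x"
    using \<open>f 0 = x\<close> \<open>f m = x\<close> \<open>p \<noteq> x\<close> by (simp_all add: g_def)
  then have "dloop (X - {p}) \<kappa> x m g"
    using close step unfolding dloop_def dpath_def by simp
  with close show ?thesis
    using that by blast
qed

theorem trivial_fundamental_group_remove_bypassable:
  assumes "p \<noteq> x" and "bypassable X \<kappa> p" and "pointed_contractible (X - {p}) \<kappa> x"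
  shows "trivial_fundamental_group X \<kappa> x"
  unfolding trivial_fundamental_group_def
proof (intro allI impI)
  fix m f
  assume f: "dloop X \<kappa> x m f"
  obtain g where g: "dloop (X - {p}) \<kappa> x m g" and close: "\<forall>s\<le>m. f s = g s \<or> \<kappa> (f s) (g s)"
    using dloop_avoid_bypassable[OF f assms(1,2)] .
  have "homotopic_rel_end (X - {p}) \<kappa> x m g (\<lambda>_. x)"
    using homotopic_rel_end_const_if_pointed_contractible[OF assms(3) g] .
  then have "homotopic_rel_end X \<kappa> x m g (\<lambda>_. x)"
    by (rule homotopic_rel_end_mono[OF _ Diff_subset])
  then have "homotopic_rel_end X \<kappa> x m f (\<lambda>_. x)"
    using f close by (rule homotopic_rel_end_close_left)
  then show "loop_equiv X \<kappa> x m f 0 (\<lambda>_. x)"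
    by (rule loop_equiv_const_if_homotopic)
qed

definition deformation_step :: "('a \<Rightarrow> 'a \<Rightarrow> bool) \<Rightarrow> 'a set \<Rightarrow> 'a \<Rightarrow> ('a \<Rightarrow> 'a) \<Rightarrow> bool" where
  "deformation_step \<kappa> S x r \<longleftrightarrow> r x = x \<and> (\<forall>p\<in>S. r p \<in> S) \<and> (\<forall>p\<in>S. r p = p \<or> \<kappa> p (r p)) \<and>
     (\<forall>p\<in>S. \<forall>q\<in>S. \<kappa> p q \<longrightarrow> r p = r q \<or> \<kappa> (r p) (r q))"

lemma pointed_contractible_singleton: "pointed_contractible {x} \<kappa> x"
  unfolding pointed_contractible_def pointed_null_homotopic_def
  by (rule exI[of _ "\<lambda>_ p. p"], rule exI[of _ 0]) auto

lemma pointed_null_homotopic_precompose: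
  assumes r: "deformation_step \<kappa> S x r" and "pointed_contractible (r ` S) \<kappa> x"
  shows "pointed_null_homotopic S \<kappa> x r"
proof -
  from assms(2) obtain R k where R0: "\<forall>q\<in>r ` S. R 0 q = id q" and Rk: "\<forall>q\<in>r ` S. R k q = x"
    and Rx: "\<forall>t\<le>k. R t x = x" and RX: "\<forall>t\<le>k. \<forall>q\<in>r ` S. R t q \<in> r ` S"
    and Rcont: "\<forall>t\<le>k. \<forall>a\<in>r ` S. \<forall>b\<in>r ` S. \<kappa> a b \<longrightarrow> R t a = R t b \<or> \<kappa> (R t a) (R t b)"
    and Rstep: "\<forall>t<k. \<forall>q\<in>r ` S. R t q = R (Suc t) q \<or> \<kappa> (R t q) (R (Suc t) q)"
    unfolding pointed_contractible_def pointed_null_homotopic_def by (elim exE conjE) (rule that)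
  from r have rx: "r x = x" and rS: "r ` S \<subseteq> S"
    and rcont: "\<forall>p\<in>S. \<forall>q\<in>S. \<kappa> p q \<longrightarrow> r p = r q \<or> \<kappa> (r p) (r q)"
    unfolding deformation_step_def by blast+
  show ?thesis
    unfolding pointed_null_homotopic_def
  proof (intro exI[of _ "\<lambda>t p. R t (r p)"] exI[of _ k] conjI ballI allI impI)
    fix t p q assume t: "t \<le> k" and pq: "p \<in> S" "q \<in> S" "\<kappa> p q"
    have "r p \<in> r ` S" "r q \<in> r ` S"
      using pq by simp_all
    note cont = Rcont[rule_format, OF t this]
    from rcont pq have "r p = r q \<or> \<kappa> (r p) (r q)"
      by simp
    then show "R t (r p) = R t (r q) \<or> \<kappa> (R t (r p)) (R t (r q))"
      using cont by auto
  next
    fix t p assume "t \<le> k" "p \<in> S"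
    then show "R t (r p) \<in> S"
      using RX rS by auto
  qed (use R0 Rk Rx rx Rstep in simp_all)
qed

lemma pointed_contractible_if_null_homotopic_near_id:
  assumes near: "\<forall>p\<in>S. r p = p \<or> \<kappa> p (r p)" and "pointed_null_homotopic S \<kappa> x r"
  shows "pointed_contractible S \<kappa> x"
proof -
  from assms(2) obtain R k where R0: "\<forall>p\<in>S. R 0 p = r p" and Rk: "\<forall>p\<in>S. R k p = x"
    and Rx: "\<forall>t\<le>k. R t x = x" and RX: "\<forall>t\<le>k. \<forall>p\<in>S. R t p \<in> S"
    and Rcont: "\<forall>t\<le>k. \<forall>p\<in>S. \<forall>q\<in>S. \<kappa> p q \<longrightarrow> R t p = R t q \<or> \<kappa> (R t p) (R t q)"
    and Rstep: "\<forall>t<k. \<forall>p\<in>S. R t p = R (Suc t) p \<or> \<kappa> (R t p) (R (Suc t) p)"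
    unfolding pointed_null_homotopic_def by (elim exE conjE) (rule that)
  define R' where "R' t p = (case t of 0 \<Rightarrow> p | Suc t' \<Rightarrow> R t' p)" for t p
  show ?thesis
    unfolding pointed_contractible_def pointed_null_homotopic_def
  proof (intro exI[of _ R'] exI[of _ "Suc k"] conjI ballI allI impI)
    fix t p assume t: "t < Suc k" and p: "p \<in> S"
    show "R' t p = R' (Suc t) p \<or> \<kappa> (R' t p) (R' (Suc t) p)"
    proof (cases t)
      case 0
      then show ?thesis
        using near R0 p by (auto simp: R'_def)
    qed (use Rstep t p in \<open>simp add: R'_def\<close>)
  qed (use Rk Rx RX Rcont in \<open>simp_all add: R'_def split: nat.split\<close>)
qed

lemma pointed_contractible_deformation_step:
  assumes "deformation_step \<kappa> S x r" and "pointed_contractible (r ` S) \<kappa> x"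
  shows "pointed_contractible S \<kappa> x"
proof -
  have "\<forall>p\<in>S. r p = p \<or> \<kappa> p (r p)"
    using assms(1) by (simp add: deformation_step_def)
  then show ?thesis
    using pointed_null_homotopic_precompose[OF assms] by (rule pointed_contractible_if_null_homotopic_near_id)
qed

definition assoc_map :: "('a \<times> 'a) list \<Rightarrow> 'a \<Rightarrow> 'a" where
  "assoc_map al p = (case map_of al p of None \<Rightarrow> p | Some q \<Rightarrow> q)"

fun deformation_certificate :: "('a \<Rightarrow> 'a \<Rightarrow> bool) \<Rightarrow> 'a set \<Rightarrow> 'a \<Rightarrow> ('a \<times> 'a) list list \<Rightarrow> bool" where
  "deformation_certificate \<kappa> S x [] \<longleftrightarrow> S = {x}"
| "deformation_certificate \<kappa> S x (al # als) \<longleftrightarrow>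
     deformation_step \<kappa> S x (assoc_map al) \<and> deformation_certificate \<kappa> (assoc_map al ` S) x als"

lemma pointed_contractible_if_deformation_certificate:
  "deformation_certificate \<kappa> S x als \<Longrightarrow> pointed_contractible S \<kappa> x"
proof (induction als arbitrary: S)
  case Nil
  then show ?case
    by (simp add: pointed_contractible_singleton)
next
  case (Cons al als)
  then show ?case
    using pointed_contractible_deformation_step[of \<kappa> S x "assoc_map al"] by simp
qed

lemma trivial_fundamental_group_if_certified:
  assumes "\<forall>(x, p, als) \<in> set certs. p \<noteq> x \<and> bypassable X \<kappa> p \<and> deformation_certificate \<kappa> (X - {p}) x als"
    and "x \<in> fst ` set certs"
  shows "trivial_fundamental_group X \<kappa> x"
proof -
  obtain p als where "(x, p, als) \<in> set certs"
    using assms(2) by force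
  then have "p \<noteq> x" "bypassable X \<kappa> p" "deformation_certificate \<kappa> (X - {p}) x als"
    using assms(1) by auto
  then show ?thesis
    using trivial_fundamental_group_remove_bypassable pointed_contractible_if_deformation_certificate
    by metis
qed

text \<open>An entry (x, p, steps) gives the removed point p and the successive deformation steps of
  MSS18 - {p} onto x, each step listing only the points it moves.\<close>
definition certificates18 :: "(pt3 \<times> pt3 \<times> (pt3 \<times> pt3) list list) list" where
  "certificates18 =
    [((0,0,0), (0,3,0),
      [[((-1,2,0),(-1,1,0)), ((0,1,-1),(-1,1,0)), ((0,1,1),(-1,1,0)), ((0,2,-1),(0,1,-1)), ((0,2,1),(0,1,1)), ((1,1,0),(0,0,0)), ((1,2,0),(1,1,0))],
       [((-1,1,0),(0,0,0)), ((0,1,-1),(0,0,0)), ((0,1,1),(0,0,0)), ((1,1,0),(0,0,0))]]),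
     ((1,1,0), (0,0,0),
      [[((-1,1,0),(0,1,-1)), ((-1,2,0),(0,2,-1)), ((0,1,1),(1,1,0)), ((0,2,1),(1,2,0)), ((0,3,0),(0,2,-1))],
       [((0,2,-1),(0,1,-1)), ((1,2,0),(1,1,0))],
       [((0,1,-1),(1,1,0))]]),
     ((1,2,0), (0,0,0),
      [[((-1,1,0),(-1,2,0)), ((0,1,-1),(0,2,-1)), ((0,1,1),(0,2,1)), ((1,1,0),(1,2,0))],
       [((-1,2,0),(0,2,-1)), ((0,2,1),(0,3,0)), ((0,3,0),(0,2,-1))],
       [((0,2,-1),(1,2,0)), ((0,3,0),(1,2,0))]]),
     ((0,3,0), (0,0,0),
      [[((-1,1,0),(-1,2,0)), ((0,1,-1),(0,2,-1)), ((0,1,1),(0,2,1)), ((0,2,-1),(-1,2,0)), ((0,2,1),(-1,2,0)), ((1,1,0),(1,2,0)), ((1,2,0),(0,2,-1))],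
       [((-1,2,0),(0,3,0)), ((0,2,-1),(0,3,0)), ((0,2,1),(0,3,0)), ((1,2,0),(0,3,0))]]),
     ((-1,2,0), (0,0,0),
      [[((0,1,-1),(-1,1,0)), ((0,1,1),(-1,1,0)), ((0,2,-1),(-1,2,0)), ((0,2,1),(-1,2,0)), ((0,3,0),(-1,2,0)), ((1,1,0),(0,1,-1)), ((1,2,0),(0,2,-1))],
       [((0,1,-1),(-1,1,0)), ((0,2,-1),(-1,2,0))],
       [((-1,1,0),(-1,2,0))]]),
     ((-1,1,0), (0,0,0),
      [[((-1,2,0),(-1,1,0)), ((0,1,-1),(-1,1,0)), ((0,1,1),(-1,1,0)), ((0,2,-1),(-1,2,0)), ((0,2,1),(-1,2,0)), ((0,3,0),(-1,2,0)), ((1,1,0),(0,1,-1)), ((1,2,0),(0,2,-1))],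
       [((-1,2,0),(-1,1,0)), ((0,1,-1),(-1,1,0)), ((0,2,-1),(-1,2,0))],
       [((-1,2,0),(-1,1,0))]]),
     ((0,1,-1), (0,0,0),
      [[((0,1,1),(-1,1,0)), ((0,2,1),(-1,2,0)), ((0,3,0),(-1,2,0)), ((1,1,0),(0,1,-1)), ((1,2,0),(0,2,-1))],
       [((-1,2,0),(-1,1,0)), ((0,2,-1),(0,1,-1))],
       [((-1,1,0),(0,1,-1))]]),
     ((0,2,-1), (0,0,0),
      [[((0,1,1),(-1,1,0)), ((0,2,1),(-1,2,0)), ((0,3,0),(-1,2,0)), ((1,1,0),(0,1,-1)), ((1,2,0),(0,2,-1))],
       [((-1,1,0),(-1,2,0)), ((0,1,-1),(0,2,-1))],
       [((-1,2,0),(0,2,-1))]]),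
     ((0,2,1), (0,0,0),
      [[((0,1,-1),(-1,1,0)), ((0,2,-1),(-1,2,0)), ((0,3,0),(-1,2,0)), ((1,1,0),(0,1,1)), ((1,2,0),(0,2,1))],
       [((-1,1,0),(-1,2,0)), ((0,1,1),(0,2,1))],
       [((-1,2,0),(0,2,1))]]),
     ((0,1,1), (0,0,0),
      [[((0,1,-1),(-1,1,0)), ((0,2,-1),(-1,2,0)), ((0,3,0),(-1,2,0)), ((1,1,0),(0,1,1)), ((1,2,0),(0,2,1))],
       [((-1,2,0),(-1,1,0)), ((0,2,1),(0,1,1))],
       [((-1,1,0),(0,1,1))]])]"

definition certificates26 :: "(pt3 \<times> pt3 \<times> (pt3 \<times> pt3) list list) list" where
  "certificates26 =
    [((0,0,0), (1,2,0),
      [[((0,3,0),(-1,2,0))],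
       [((0,2,1),(0,1,1))],
       [((-1,2,0),(-1,1,0))],
       [((0,2,-1),(0,1,-1))],
       [((1,1,0),(0,0,0))],
       [((0,1,-1),(0,0,0))],
       [((-1,1,0),(0,0,0))],
       [((0,1,1),(0,0,0))]]),
     ((1,1,0), (0,0,0),
      [[((-1,1,0),(-1,2,0))],
       [((0,1,-1),(0,2,-1))],
       [((0,1,1),(0,2,1))],
       [((-1,2,0),(0,3,0))],
       [((0,2,1),(1,2,0))],
       [((0,3,0),(0,2,-1))],
       [((0,2,-1),(1,1,0))],
       [((1,2,0),(1,1,0))]]),
     ((1,2,0), (0,0,0),
      [[((1,1,0),(1,2,0))],
       [((-1,1,0),(-1,2,0))],
       [((0,1,-1),(0,2,-1))],
       [((0,2,-1),(0,3,0))],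
       [((0,3,0),(0,2,1))],
       [((0,2,1),(0,1,1))],
       [((-1,2,0),(0,1,1))],
       [((0,1,1),(1,2,0))]]),
     ((0,3,0), (0,0,0),
      [[((1,1,0),(1,2,0))],
       [((-1,1,0),(-1,2,0))],
       [((0,1,-1),(0,2,-1))],
       [((0,2,-1),(0,3,0))],
       [((1,2,0),(0,2,1))],
       [((0,2,1),(-1,2,0))],
       [((0,1,1),(-1,2,0))],
       [((-1,2,0),(0,3,0))]]),
     ((-1,2,0), (0,0,0),
      [[((1,1,0),(1,2,0))],
       [((-1,1,0),(-1,2,0))],
       [((0,1,-1),(0,2,-1))],
       [((0,2,-1),(0,3,0))],
       [((1,2,0),(0,2,1))],
       [((0,2,1),(-1,2,0))],
       [((0,3,0),(-1,2,0))],
       [((0,1,1),(-1,2,0))]]),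
     ((-1,1,0), (0,0,0),
      [[((1,1,0),(1,2,0))],
       [((0,1,-1),(0,2,-1))],
       [((0,1,1),(0,2,1))],
       [((1,2,0),(0,3,0))],
       [((0,2,1),(-1,2,0))],
       [((0,2,-1),(-1,2,0))],
       [((0,3,0),(-1,2,0))],
       [((-1,2,0),(-1,1,0))]]),
     ((0,1,-1), (0,0,0),
      [[((1,1,0),(1,2,0))],
       [((-1,1,0),(-1,2,0))],
       [((0,1,1),(0,2,1))],
       [((0,2,1),(0,3,0))],
       [((1,2,0),(0,2,-1))],
       [((0,3,0),(0,2,-1))],
       [((0,2,-1),(0,1,-1))],
       [((-1,2,0),(0,1,-1))]]),
     ((0,2,-1), (0,0,0),
      [[((1,1,0),(1,2,0))],
       [((-1,1,0),(-1,2,0))],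
       [((0,1,-1),(0,2,-1))],
       [((0,1,1),(0,2,1))],
       [((0,2,1),(0,3,0))],
       [((0,3,0),(0,2,-1))],
       [((1,2,0),(0,2,-1))],
       [((-1,2,0),(0,2,-1))]]),
     ((0,2,1), (0,0,0),
      [[((1,1,0),(1,2,0))],
       [((-1,1,0),(-1,2,0))],
       [((0,1,-1),(0,2,-1))],
       [((0,2,-1),(0,3,0))],
       [((1,2,0),(0,2,1))],
       [((0,3,0),(0,2,1))],
       [((-1,2,0),(0,2,1))],
       [((0,1,1),(0,2,1))]]),
     ((0,1,1), (0,0,0),
      [[((1,1,0),(1,2,0))],
       [((-1,1,0),(-1,2,0))],
       [((0,1,-1),(0,2,-1))],
       [((0,2,-1),(0,3,0))],
       [((1,2,0),(0,2,1))],
       [((0,2,1),(-1,2,0))],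
       [((0,3,0),(-1,2,0))],
       [((-1,2,0),(0,1,1))]])]"

theorem corollary3p2:
  assumes "x \<in> MSS18"
  shows "trivial_fundamental_group MSS18 adj18 x \<and> trivial_fundamental_group MSS18 adj26 x"
proof
  have "\<forall>(x, p, als) \<in> set certificates18.
      p \<noteq> x \<and> bypassable MSS18 adj18 p \<and> deformation_certificate adj18 (MSS18 - {p}) x als"
    unfolding certificates18_def by code_simp
  moreover have "MSS18 = fst ` set certificates18"
    unfolding certificates18_def MSS18_def by simp
  ultimately show "trivial_fundamental_group MSS18 adj18 x"
    using assms by (auto intro: trivial_fundamental_group_if_certified)
  have "\<forall>(x, p, als) \<in> set certificates26.
      p \<noteq> x \<and> bypassable MSS18 adj26 p \<and> deformation_certificate adj26 (MSS18 - {p}) x als"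
    unfolding certificates26_def by code_simp
  moreover have "MSS18 = fst ` set certificates26"
    unfolding certificates26_def MSS18_def by simp
  ultimately show "trivial_fundamental_group MSS18 adj26 x"
    using assms by (auto intro: trivial_fundamental_group_if_certified)
qed

end
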